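(* In the ROTAF procedure, under Assumption A and $B<\frac G2$, for every round $t$, $$\mathbb E\|\mathbf w_{t+1}-\mathbf w_t+\eta f'(\mathbf w_t)\|^2\le C_\alpha^2\,\eta^2\left(\delta^2+\kappa^2+\frac{p\sigma^2}{mPh_{\min}^2}K^2\right),$$ with $\alpha=B/G$ and $C_\alpha=\frac{2-2\alpha}{1-2\alpha}$.
   Context: Setting: $N$ clients, of which $B$ are Byzantine. The global loss is $f(\mathbf w)=\frac1N\sum_n f_n(\mathbf w)$, where $f_n(\mathbf w)=\mathbb E_{\xi\sim\mathcal D_n}f_n(\mathbf w,\xi)$. For an honest client $n$, $f'_{n,j}$ is an unbiased stochastic gradient of $f_n$ computed on a uniformly random sample $j$. Assumption A: constants $\mu,L,\delta,\kappa,K>0$ such that (i) $f$ is $\mu$-strongly convex; (ii) $f'$ is $L$-Lipschitz; (iii) $\|f'_n-f'\|^2\le\delta^2$ for honest $n$; (iv) $\mathbb E\|f'_{n,j}-f'_n\|^2\le\kappa^2$ for honest $n$; (v) $\mathbb E\|f'_{n,j}\|^2\le K^2$ for honest $n$. All bounds hold at every point. ROTAF procedure (step size $\eta$, power $P$, noise variance $\sigma^2$, threshold $h_{\min}>0$, group size $m$, $G=N/m$). At round $t$: 1. The clients are split uniformly at random into $G$ groups $\mathcal G_{t,g}$ of size $m$. 2. Each honest $n$ computes $\mathbf m_t^n=-\eta f'_{n,i_n^t}(\mathbf w_t)$. 3. Set $\rho_t=\sqrt{P/\max_n\mathbb E\|\mathbf m_t^n\|^2}$. All clients transmit. 4. For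 each group with no Byzantine client, the server gets $\mathbf u_g^t=\frac1m\sum_{n\in\mathcal G_{t,g}}\mathbf m_t^n+\mathbf z_{t,g}$, with independent noise $\mathbf z_{t,g}\sim\mathcal N(\mathbf0,\frac{\sigma^2}{m^2\rho_t^2h_{\min}^2}\mathbf I_p)$. Groups containing a Byzantine client produce arbitrary $\mathbf u_g^t$. 5. $\mathbf w_{t+1}=\mathbf w_t+\mathrm{geomed}(\mathbf u_1^t,\dots,\mathbf u_G^t)$, where $\mathrm{geomed}(\{\mathbf u_i\})=\arg\min_{\mathbf z}\sum_i\|\mathbf z-\mathbf u_i\|$. Expectations are over the stochastic gradients, the group assignment and the noise. *)

theory Defs
  imports "HOL-Analysis.Analysis" "HOL-Probability.Probability"
begin

definition strongly_convex :: "real \<Rightarrow> ('a::real_normed_vector \<Rightarrow> real) \<Rightarrow> bool" where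
  "strongly_convex \<mu> f \<longleftrightarrow>
     (\<forall>x y t. 0 \<le> t \<and> t \<le> 1 \<longrightarrow>
        f (t *\<^sub>R x + (1 - t) *\<^sub>R y) \<le> t * f x + (1 - t) * f y - \<mu> / 2 * t * (1 - t) * (norm (x - y))\<^sup>2)"

definition geomed :: "nat \<Rightarrow> (nat \<Rightarrow> 'a::real_normed_vector) \<Rightarrow> 'a" where
  "geomed G u = (SOME z. \<forall>y. (\<Sum>g<G. norm (z - u g)) \<le> (\<Sum>g<G. norm (y - u g)))"

definition std_gauss :: "'a::euclidean_space measure" where
  "std_gauss = density lborel
     (\<lambda>x. ennreal ((2 * pi) powr (- real DIM('a) / 2) * exp (- (norm x)\<^sup>2 / 2)))"

definition group_assignments :: "nat \<Rightarrow> nat \<Rightarrow> nat \<Rightarrow> (nat \<Rightarrow> nat) set" where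
  "group_assignments N G m =
     {a. (\<forall>n. N \<le> n \<longrightarrow> a n = 0) \<and> (\<forall>n<N. a n < G) \<and>
         (\<forall>g<G. card {n. n < N \<and> a n = g} = m)}"

definition loc_loss :: "(nat \<Rightarrow> nat \<Rightarrow> 'a \<Rightarrow> real) \<Rightarrow> (nat \<Rightarrow> nat) \<Rightarrow> nat \<Rightarrow> 'a \<Rightarrow> real" where
  "loc_loss l J n w = (\<Sum>j<J n. l n j w) / real (J n)"

definition glob_loss :: "nat \<Rightarrow> (nat \<Rightarrow> nat \<Rightarrow> 'a \<Rightarrow> real) \<Rightarrow> (nat \<Rightarrow> nat) \<Rightarrow> 'a \<Rightarrow> real" where
  "glob_loss N l J w = (\<Sum>n<N. loc_loss l J n w) / real N"

definition loc_grad :: "(nat \<Rightarrow> nat \<Rightarrow> 'a \<Rightarrow> 'a::real_vector) \<Rightarrow> (nat \<Rightarrow> nat) \<Rightarrow> nat \<Rightarrow> 'a \<Rightarrow> 'a" where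
  "loc_grad sg J n w = (1 / real (J n)) *\<^sub>R (\<Sum>j<J n. sg n j w)"

definition glob_grad :: "nat \<Rightarrow> (nat \<Rightarrow> nat \<Rightarrow> 'a \<Rightarrow> 'a::real_vector) \<Rightarrow> (nat \<Rightarrow> nat) \<Rightarrow> 'a \<Rightarrow> 'a" where
  "glob_grad N sg J w = (1 / real N) *\<^sub>R (\<Sum>n<N. loc_grad sg J n w)"

(* ROTAF: received signal of group g, given the group assignment a,
   the sample indices i, the standard-Gaussian draws zeta, the Byzantine
   outputs byz and the noise standard deviation s *)
definition rotaf_signal ::
  "nat set \<Rightarrow> nat \<Rightarrow> nat \<Rightarrow> real \<Rightarrow> (nat \<Rightarrow> nat \<Rightarrow> 'a \<Rightarrow> 'a::real_vector) \<Rightarrow> 'a \<Rightarrow> real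
   \<Rightarrow> (nat \<Rightarrow> nat) \<Rightarrow> (nat \<Rightarrow> nat) \<Rightarrow> (nat \<Rightarrow> 'a) \<Rightarrow> (nat \<Rightarrow> 'a) \<Rightarrow> nat \<Rightarrow> 'a" where
  "rotaf_signal Byz N m \<eta> sg w s a i zeta byz g =
     (if (\<exists>n\<in>Byz. a n = g) then byz g
      else (1 / real m) *\<^sub>R (\<Sum>n\<in>{n. n < N \<and> a n = g}. - \<eta> *\<^sub>R sg n (i n) w) + s *\<^sub>R zeta g)"

definition rotaf_rho ::
  "nat set \<Rightarrow> nat \<Rightarrow> real \<Rightarrow> real \<Rightarrow> (nat \<Rightarrow> nat \<Rightarrow> 'a \<Rightarrow> 'a::real_normed_vector) \<Rightarrow> (nat \<Rightarrow> nat) \<Rightarrow> 'a \<Rightarrow> real" where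
  "rotaf_rho Byz N P \<eta> sg J w =
     sqrt (P / Max ((\<lambda>n. (\<Sum>j<J n. (norm (- \<eta> *\<^sub>R sg n j w))\<^sup>2) / real (J n)) ` ({..<N} - Byz)))"

end

theory Submission
  imports Defs
begin

text \<open>
  If fewer than half of the \<open>G\<close> received signals \<open>u g\<close> are corrupted, their geometric median
  \<open>z\<close> is close to every point \<open>x\<close> that the honest signals are close to: comparing the cost of
  \<open>z\<close> with that of \<open>x\<close> via the triangle inequality gives
  \<open>(k - b) \<parallel>z - x\<parallel> \<le> 2 \<Sum>\<parallel>u g - x\<parallel>\<close> (sum over the \<open>k\<close> honest groups, \<open>b\<close> corrupted ones),
  and Cauchy-Schwarz turns this into \<open>\<parallel>z - x\<parallel>\<^sup>2 \<le> C\<^sup>2 \<cdot> mean \<parallel>u g - x\<parallel>\<^sup>2\<close>.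
  Take \<open>x = -\<eta> f'(w)\<close>. An honest signal is the average of \<open>m\<close> sampled messages plus Gaussian
  noise; the noise contributes \<open>p s\<^sup>2\<close> in expectation, and each sampled message deviates from
  \<open>-\<eta> f'(w)\<close> by at most \<open>\<eta>\<^sup>2 (\<delta>\<^sup>2 + \<kappa>\<^sup>2)\<close> in mean square (variance plus squared bias).
  Finally the power normalisation \<open>\<rho>\<close> bounds \<open>s\<^sup>2\<close> by \<open>\<eta>\<^sup>2 \<sigma>\<^sup>2 K\<^sup>2 / (m P hmin\<^sup>2)\<close>.
\<close>

section \<open>Gaussian noise\<close>

lemma nn_integral_std_normal_affine_sq:
  fixes a s :: real
  shows "(\<integral>\<^sup>+t. ennreal (std_normal_density t * (a + s * t)\<^sup>2) \<partial>lborel) = ennreal (a\<^sup>2 + s\<^sup>2)"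
proof -
  have "has_bochner_integral lborel (\<lambda>t. a\<^sup>2 * (std_normal_density t * t ^ (2 * 0))
      + (2 * a * s) * (std_normal_density t * t ^ (2 * 0 + 1)) + s\<^sup>2 * (std_normal_density t * t ^ (2 * 1)))
      (a\<^sup>2 * 1 + (2 * a * s) * 0 + s\<^sup>2 * 1)"
    using std_normal_moment_even[of 0] std_normal_moment_odd[of 0] std_normal_moment_even[of 1]
    by (intro has_bochner_integral_add has_bochner_integral_mult_right) simp_all
  then have "has_bochner_integral lborel (\<lambda>t. std_normal_density t * (a + s * t)\<^sup>2) (a\<^sup>2 + s\<^sup>2)"
    by (simp add: power2_eq_square algebra_simps)
  then show ?thesis
    by (simp add: nn_integral_eq_integral has_bochner_integral_iff std_normal_density_def)
qed

lemma norm_sq_eq_sum_Basis: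
  fixes x :: "'a::euclidean_space"
  shows "(norm x)\<^sup>2 = (\<Sum>b\<in>Basis. (x \<bullet> b)\<^sup>2)"
  by (metis (no_types) euclidean_inner power2_eq_square power2_norm_eq_inner sum.cong)

lemma std_gauss_density_eq_prod:
  fixes x :: "'a::euclidean_space"
  shows "(2 * pi) powr (- real DIM('a) / 2) * exp (- (norm x)\<^sup>2 / 2)
       = (\<Prod>b\<in>Basis. std_normal_density (x \<bullet> b))"
proof -
  have "(2 * pi) powr (- real DIM('a) / 2) = (1 / sqrt (2 * pi)) ^ DIM('a)"
  proof -
    have "(2 * pi) powr (real DIM('a) / 2) = ((2 * pi) powr (1 / 2)) powr real DIM('a)"
      by (simp add: powr_powr)
    also have "\<dots> = sqrt (2 * pi) ^ DIM('a)"
      by (simp add: powr_half_sqrt powr_realpow)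
    finally show ?thesis
      by (simp add: powr_minus_divide power_one_over)
  qed
  moreover have "exp (- (norm x)\<^sup>2 / 2) = (\<Prod>b\<in>(Basis::'a set). exp (- (x \<bullet> b)\<^sup>2 / 2))"
    by (simp add: norm_sq_eq_sum_Basis exp_sum[symmetric] sum_negf sum_divide_distrib)
  ultimately show ?thesis
    by (simp only: std_normal_density_def prod.distrib prod_constant)
qed

lemma nn_integral_std_gauss:
  fixes f :: "'a::euclidean_space \<Rightarrow> ennreal"
  assumes f: "f \<in> borel_measurable borel"
  shows "(\<integral>\<^sup>+x. f x \<partial>std_gauss) =
    (\<integral>\<^sup>+\<phi>. (\<Prod>b\<in>Basis. ennreal (std_normal_density (\<phi> b))) * f (\<Sum>b\<in>Basis. \<phi> b *\<^sub>R b)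
       \<partial>PiM Basis (\<lambda>_. lborel))"
proof -
  let ?d = "\<lambda>x::'a. ennreal ((2 * pi) powr (- real DIM('a) / 2) * exp (- (norm x)\<^sup>2 / 2))"
  have "(\<integral>\<^sup>+x. f x \<partial>std_gauss) = (\<integral>\<^sup>+x. ?d x * f x \<partial>lborel)"
    unfolding std_gauss_def using f by (intro nn_integral_density) auto
  also have "\<dots> = (\<integral>\<^sup>+\<phi>. ?d (\<Sum>b\<in>Basis. \<phi> b *\<^sub>R b) * f (\<Sum>b\<in>Basis. \<phi> b *\<^sub>R b)
      \<partial>PiM Basis (\<lambda>_. lborel))"
    by (subst lborel_eq, rule nn_integral_distr) (use f in measurable)
  also have "\<dots> = (\<integral>\<^sup>+\<phi>. (\<Prod>b\<in>Basis. ennreal (std_normal_density (\<phi> b))) * f (\<Sum>b\<in>Basis. \<phi> b *\<^sub>R b)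
      \<partial>PiM Basis (\<lambda>_. lborel))"
  proof (rule nn_integral_cong)
    fix \<phi> :: "'a \<Rightarrow> real"
    have "(\<Prod>b\<in>Basis. std_normal_density ((\<Sum>c\<in>Basis. \<phi> c *\<^sub>R c) \<bullet> b))
        = (\<Prod>b\<in>Basis. std_normal_density (\<phi> b))"
      by (rule prod.cong) simp_all
    then show "?d (\<Sum>b\<in>Basis. \<phi> b *\<^sub>R b) * f (\<Sum>b\<in>Basis. \<phi> b *\<^sub>R b)
        = (\<Prod>b\<in>Basis. ennreal (std_normal_density (\<phi> b))) * f (\<Sum>b\<in>Basis. \<phi> b *\<^sub>R b)"
      unfolding std_gauss_density_eq_prod by (simp add: prod_ennreal)
  qed
  finally show ?thesis .
qed

lemma prob_space_std_gauss: "prob_space (std_gauss :: 'a::euclidean_space measure)"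
proof (rule prob_spaceI)
  interpret product_sigma_finite "\<lambda>_. lborel :: real measure"
    by standard
  have "(\<integral>\<^sup>+x. 1 \<partial>(std_gauss::'a measure)) =
    (\<integral>\<^sup>+\<phi>. (\<Prod>b\<in>Basis. ennreal (std_normal_density (\<phi> b))) \<partial>PiM (Basis::'a set) (\<lambda>_. lborel))"
    using nn_integral_std_gauss[of "\<lambda>_. 1"] by simp
  also have "\<dots> = (\<Prod>b\<in>(Basis::'a set). \<integral>\<^sup>+t. ennreal (std_normal_density t) \<partial>lborel)"
    by (rule product_nn_integral_prod) auto
  also have "\<dots> = 1"
    using nn_integral_std_normal_affine_sq[of 1 0] by simp
  finally show "emeasure (std_gauss :: 'a measure) (space std_gauss) = 1"
    by simp
qed

lemma nn_integral_std_gauss_norm_sq: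
  fixes a :: "'a::euclidean_space" and s :: real
  shows "(\<integral>\<^sup>+x. ennreal ((norm (a + s *\<^sub>R x))\<^sup>2) \<partial>std_gauss) = ennreal ((norm a)\<^sup>2 + real DIM('a) * s\<^sup>2)"
proof -
  interpret product_sigma_finite "\<lambda>_. lborel :: real measure"
    by standard
  define h where "h c b t = ennreal (std_normal_density t * (if b = c then (a \<bullet> c + s * t)\<^sup>2 else 1))"
    for c b :: 'a and t :: real
  have h_meas: "h c b \<in> borel_measurable borel" for c b
    unfolding h_def by measurable
  have factor: "(\<Prod>b\<in>Basis. ennreal (std_normal_density (\<phi> b)))
      * ennreal ((norm (a + s *\<^sub>R (\<Sum>b\<in>Basis. \<phi> b *\<^sub>R b)))\<^sup>2)
      = (\<Sum>c\<in>Basis. \<Prod>b\<in>Basis. h c b (\<phi> b))" for \<phi> :: "'a \<Rightarrow> real"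
  proof -
    have "(\<Prod>b\<in>Basis. std_normal_density (\<phi> b) * (if b = c then (a \<bullet> c + s * \<phi> b)\<^sup>2 else 1))
        = (\<Prod>b\<in>Basis. std_normal_density (\<phi> b)) * (a \<bullet> c + s * \<phi> c)\<^sup>2" if "c \<in> Basis" for c
      using that by (simp add: prod.distrib)
    then show ?thesis
      unfolding h_def
      by (simp add: prod_ennreal prod_nonneg ennreal_mult'[symmetric] sum_distrib_left
          norm_sq_eq_sum_Basis[of "a + _"] inner_add_left)
  qed
  have "(\<integral>\<^sup>+x. ennreal ((norm (a + s *\<^sub>R x))\<^sup>2) \<partial>std_gauss)
      = (\<integral>\<^sup>+\<phi>. (\<Sum>c\<in>Basis. \<Prod>b\<in>Basis. h c b (\<phi> b)) \<partial>PiM Basis (\<lambda>_. lborel))"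
    by (simp add: nn_integral_std_gauss factor)
  also have "\<dots> = (\<Sum>c\<in>Basis. \<integral>\<^sup>+\<phi>. (\<Prod>b\<in>Basis. h c b (\<phi> b)) \<partial>PiM Basis (\<lambda>_. lborel))"
    by (rule nn_integral_sum) (use h_meas in measurable)
  also have "\<dots> = (\<Sum>c\<in>Basis. \<Prod>b\<in>Basis. \<integral>\<^sup>+t. h c b t \<partial>lborel)"
    by (intro sum.cong refl product_nn_integral_prod) (auto simp: h_meas)
  also have "\<dots> = (\<Sum>c\<in>Basis. ennreal ((a \<bullet> c)\<^sup>2 + s\<^sup>2))"
  proof -
    have "(\<integral>\<^sup>+t. h c b t \<partial>lborel) = (if b = c then ennreal ((a \<bullet> c)\<^sup>2 + s\<^sup>2) else 1)" for c b
      using nn_integral_std_normal_affine_sq[of 1 0] nn_integral_std_normal_affine_sq[of "a \<bullet> c" s]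
      by (simp add: h_def)
    then show ?thesis
      by simp
  qed
  also have "\<dots> = ennreal ((norm a)\<^sup>2 + real DIM('a) * s\<^sup>2)"
    by (simp add: sum.distrib norm_sq_eq_sum_Basis[of a] sum_nonneg ennreal_mult
        ennreal_of_nat_eq_real_of_nat)
  finally show ?thesis .
qed

lemma sets_std_gauss [measurable_cong, simp]: "sets (std_gauss :: 'a::euclidean_space measure) = sets borel"
  by (simp add: std_gauss_def)

lemma nn_integral_PiM_component:
  assumes M: "\<And>i. i \<in> I \<Longrightarrow> prob_space (M i)" and i: "i \<in> I"
    and f: "f \<in> borel_measurable (M i)"
  shows "(\<integral>\<^sup>+\<omega>. f (\<omega> i) \<partial>PiM I M) = (\<integral>\<^sup>+x. f x \<partial>M i)"
proof -
  have "(\<integral>\<^sup>+x. f x \<partial>M i) = (\<integral>\<^sup>+x. f x \<partial>distr (PiM I M) (M i) (\<lambda>\<omega>. \<omega> i))"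
    by (simp add: distr_PiM_component M i)
  also have "\<dots> = (\<integral>\<^sup>+\<omega>. f (\<omega> i) \<partial>PiM I M)"
    using i f by (intro nn_integral_distr) auto
  finally show ?thesis ..
qed

lemma nn_integral_pmf_gauss_noise:
  fixes A :: "'b \<Rightarrow> nat \<Rightarrow> 'a::euclidean_space" and c :: "'b \<Rightarrow> nat \<Rightarrow> real"
  assumes c: "\<And>x g. 0 \<le> c x g"
  shows "(\<integral>\<^sup>+\<omega>. (\<Sum>g<G. ennreal (c (fst \<omega>) g * (norm (A (fst \<omega>) g + s *\<^sub>R snd \<omega> g))\<^sup>2))
            \<partial>(measure_pmf p \<Otimes>\<^sub>M PiM {..<G} (\<lambda>_. std_gauss)))
       = (\<integral>\<^sup>+x. (\<Sum>g<G. ennreal (c x g * ((norm (A x g))\<^sup>2 + real DIM('a) * s\<^sup>2))) \<partial>p)"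
proof -
  let ?Q = "PiM {..<G} (\<lambda>_. std_gauss :: 'a measure)"
  interpret Q: prob_space ?Q
    by (intro prob_space_PiM prob_space_std_gauss)
  have "(\<integral>\<^sup>+\<omega>. (\<Sum>g<G. ennreal (c (fst \<omega>) g * (norm (A (fst \<omega>) g + s *\<^sub>R snd \<omega> g))\<^sup>2))
            \<partial>(measure_pmf p \<Otimes>\<^sub>M ?Q))
      = (\<integral>\<^sup>+x. \<integral>\<^sup>+\<zeta>. (\<Sum>g<G. ennreal (c x g * (norm (A x g + s *\<^sub>R \<zeta> g))\<^sup>2)) \<partial>?Q \<partial>p)"
  proof -
    define F where "F x \<zeta> = (\<Sum>g<G. ennreal (c x g * (norm (A x g + s *\<^sub>R \<zeta> g))\<^sup>2))"
      for x and \<zeta> :: "nat \<Rightarrow> 'a"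
    have [measurable]: "(\<lambda>x. c x g) \<in> borel_measurable (measure_pmf p)"
      "(\<lambda>x. A x g) \<in> borel_measurable (measure_pmf p)" for g
      by simp_all
    have "(\<lambda>\<omega>. F (fst \<omega>) (snd \<omega>)) \<in> borel_measurable (measure_pmf p \<Otimes>\<^sub>M ?Q)"
      unfolding F_def by measurable
    from Q.nn_integral_fst[OF this] show ?thesis
      by (simp add: F_def)
  qed
  also have "\<dots> = (\<integral>\<^sup>+x. (\<Sum>g<G. ennreal (c x g * ((norm (A x g))\<^sup>2 + real DIM('a) * s\<^sup>2))) \<partial>p)"
  proof (intro nn_integral_cong)
    fix x
    have "(\<integral>\<^sup>+\<zeta>. ennreal (c x g * (norm (A x g + s *\<^sub>R \<zeta> g))\<^sup>2) \<partial>?Q)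
        = ennreal (c x g * ((norm (A x g))\<^sup>2 + real DIM('a) * s\<^sup>2))" if "g < G" for g
    proof -
      have "(\<integral>\<^sup>+\<zeta>. ennreal ((norm (A x g + s *\<^sub>R \<zeta> g))\<^sup>2) \<partial>?Q)
          = (\<integral>\<^sup>+z. ennreal ((norm (A x g + s *\<^sub>R z))\<^sup>2) \<partial>std_gauss)"
        using that by (intro nn_integral_PiM_component prob_space_std_gauss) auto
      moreover have "(\<lambda>\<zeta>. ennreal ((norm (A x g + s *\<^sub>R \<zeta> g))\<^sup>2)) \<in> borel_measurable ?Q"
        by measurable (simp add: that)
      ultimately show ?thesis
        using c by (simp add: ennreal_mult nn_integral_cmult nn_integral_std_gauss_norm_sq)
    qed
    then show "(\<integral>\<^sup>+\<zeta>. (\<Sum>g<G. ennreal (c x g * (norm (A x g + s *\<^sub>R \<zeta> g))\<^sup>2)) \<partial>?Q)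
        = (\<Sum>g<G. ennreal (c x g * ((norm (A x g))\<^sup>2 + real DIM('a) * s\<^sup>2)))"
      by (subst nn_integral_sum) auto
  qed
  finally show ?thesis .
qed

section \<open>Robustness of the geometric median\<close>

lemma geomed_is_minimiser:
  fixes u :: "nat \<Rightarrow> 'a::euclidean_space"
  assumes "0 < G"
  shows "(\<Sum>g<G. norm (geomed G u - u g)) \<le> (\<Sum>g<G. norm (y - u g))"
proof -
  define F where "F z = (\<Sum>g<G. norm (z - u g))" for z
  have dist_u0_le: "norm (y - u 0) \<le> F y" for y
    unfolding F_def using assms by (intro member_le_sum) auto
  have far: "F 0 < F y" if "2 * F 0 < norm y" for y
    using that dist_u0_le[of 0] dist_u0_le[of y] norm_triangle_ineq2[of y "u 0"] by simp
  have "continuous_on (cball 0 (2 * F 0)) F"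
    unfolding F_def by (intro continuous_intros)
  moreover have "0 \<in> cball 0 (2 * F 0)"
    unfolding F_def by (simp add: sum_nonneg)
  ultimately obtain z where min: "\<forall>y\<in>cball 0 (2 * F 0). F z \<le> F y"
    using continuous_attains_inf[OF compact_cball] by blast
  have "\<forall>y. F z \<le> F y"
  proof
    fix y
    show "F z \<le> F y"
    proof (cases "y \<in> cball 0 (2 * F 0)")
      case False
      then have "F 0 < F y"
        by (intro far) simp
      moreover have "F z \<le> F 0"
        using min \<open>0 \<in> cball 0 (2 * F 0)\<close> by blast
      ultimately show ?thesis
        by linarith
    qed (use min in blast)
  qed
  then have "\<forall>y. F (geomed G u) \<le> F y"
    unfolding geomed_def F_def by (rule someI)
  then show ?thesis
    unfolding F_def by blast
qed

lemma minimiser_dist_le_honest_sum: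
  fixes u :: "nat \<Rightarrow> 'a::real_normed_vector"
  assumes zmin: "(\<Sum>g<G. norm (z - u g)) \<le> (\<Sum>g<G. norm (x - u g))"
    and Gd: "Gd \<subseteq> {..<G}"
  shows "(real (card Gd) - real (card ({..<G} - Gd))) * norm (z - x) \<le> 2 * (\<Sum>g\<in>Gd. norm (u g - x))"
proof -
  let ?Bd = "{..<G} - Gd"
  have split: "(\<Sum>g<G. f g) = (\<Sum>g\<in>Gd. f g) + (\<Sum>g\<in>?Bd. f g)" for f :: "nat \<Rightarrow> real"
    using Gd by (metis finite_lessThan sum.subset_diff add.commute)
  have "norm (z - x) - norm (u g - x) \<le> norm (z - u g)" for g
    using norm_triangle_ineq[of "z - u g" "u g - x"] by simp
  then have "(\<Sum>g\<in>Gd. norm (z - x) - norm (u g - x)) \<le> (\<Sum>g\<in>Gd. norm (z - u g))"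
    by (rule sum_mono)
  moreover have "norm (u g - x) - norm (z - x) \<le> norm (z - u g)" for g
    using norm_triangle_ineq[of "u g - z" "z - x"] by (simp add: norm_minus_commute)
  then have "(\<Sum>g\<in>?Bd. norm (u g - x) - norm (z - x)) \<le> (\<Sum>g\<in>?Bd. norm (z - u g))"
    by (rule sum_mono)
  ultimately have "(\<Sum>g\<in>Gd. norm (z - x) - norm (u g - x)) + (\<Sum>g\<in>?Bd. norm (u g - x) - norm (z - x))
      \<le> (\<Sum>g\<in>Gd. norm (u g - x)) + (\<Sum>g\<in>?Bd. norm (u g - x))"
    using zmin split[of "\<lambda>g. norm (z - u g)"] split[of "\<lambda>g. norm (x - u g)"]
    by (simp add: norm_minus_commute)
  then show ?thesis
    by (simp add: sum_subtractf algebra_simps)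
qed

lemma breakdown_factor_le:
  fixes b B G :: real
  assumes "0 \<le> b" "b \<le> B" "2 * B < G"
  shows "2 * (G - b) / (G - 2 * b) \<le> (2 - 2 * (B / G)) / (1 - 2 * (B / G))"
proof -
  have "0 < G" "0 < G - 2 * b" "0 < G - 2 * B"
    using assms by linarith+
  moreover have "(2 - 2 * (B / G)) / (1 - 2 * (B / G)) = (2 * G - 2 * B) / (G - 2 * B)"
  proof -
    have "2 - 2 * (B / G) = (2 * G - 2 * B) / G" "1 - 2 * (B / G) = (G - 2 * B) / G"
      using \<open>0 < G\<close> by (simp_all add: field_simps)
    then show ?thesis
      using \<open>0 < G\<close> by simp
  qed
  moreover have "2 * (G - b) * (G - 2 * B) \<le> (2 * G - 2 * B) * (G - 2 * b)"
    using assms \<open>0 < G\<close> by (simp add: algebra_simps)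
  ultimately show ?thesis
    by (simp add: divide_le_eq le_divide_eq mult.commute mult.left_commute)
qed

lemma minimiser_dist_sq_le:
  fixes u :: "nat \<Rightarrow> 'a::real_normed_vector" and B G :: nat
  assumes zmin: "(\<Sum>g<G. norm (z - u g)) \<le> (\<Sum>g<G. norm (x - u g))"
    and Gd: "Gd \<subseteq> {..<G}" and bad: "card ({..<G} - Gd) \<le> B" and few: "2 * B < G"
  shows "(norm (z - x))\<^sup>2
    \<le> ((2 - 2 * (B / G)) / (1 - 2 * (B / G)))\<^sup>2 / card Gd * (\<Sum>g\<in>Gd. (norm (u g - x))\<^sup>2)"
proof -
  define k where "k = real (card Gd)"
  define b where "b = real (card ({..<G} - Gd))"
  define S where "S = (\<Sum>g\<in>Gd. norm (u g - x))"
  define Q where "Q = (\<Sum>g\<in>Gd. (norm (u g - x))\<^sup>2)"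
  define C where "C = (2 - 2 * (B / G)) / (1 - 2 * (B / G))"
  have "card Gd + card ({..<G} - Gd) = G"
    using Gd by (metis card_Diff_subset card_lessThan finite_lessThan finite_subset le_add_diff_inverse card_mono)
  then have k: "k = real G - b"
    unfolding k_def b_def by linarith
  have b: "0 \<le> b" "b \<le> B" "2 * real B < real G"
    using bad few unfolding b_def by simp_all
  then have kb: "0 < k - b" "0 < k"
    unfolding k by linarith+
  have "(k - b) * norm (z - x) \<le> 2 * S"
    using minimiser_dist_le_honest_sum[OF zmin Gd] unfolding k_def b_def S_def .
  then have "norm (z - x) \<le> 2 * S / (k - b)"
    using kb by (simp add: field_simps)
  then have "(norm (z - x))\<^sup>2 \<le> (2 * S / (k - b))\<^sup>2"
    by (rule power_mono) simp
  also have "\<dots> = 4 * S\<^sup>2 / (k - b)\<^sup>2"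
    by (simp add: power_divide power_mult_distrib)
  also have "\<dots> \<le> 4 * (k * Q) / (k - b)\<^sup>2"
    using sum_squared_le_sum_of_squares[of "\<lambda>g. norm (u g - x)" Gd]
    unfolding S_def Q_def k_def by (intro divide_right_mono mult_left_mono) (simp_all add: mult.commute)
  also have "\<dots> = (2 * k / (k - b))\<^sup>2 / k * Q"
  proof -
    have "4 * (k * Q) / d\<^sup>2 = (2 * k / d)\<^sup>2 / k * Q" if "0 < d" for d
      using that kb by (simp add: field_simps power2_eq_square)
    then show ?thesis
      using kb by blast
  qed
  also have "\<dots> \<le> C\<^sup>2 / k * Q"
  proof -
    have "2 * k / (k - b) \<le> C"
      using breakdown_factor_le[OF b] unfolding k C_def by (simp add: algebra_simps)
    then have "(2 * k / (k - b))\<^sup>2 \<le> C\<^sup>2"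
      using kb by (intro power_mono) simp_all
    then show ?thesis
      using kb unfolding Q_def by (intro mult_right_mono divide_right_mono) (simp_all add: sum_nonneg)
  qed
  finally show ?thesis
    unfolding C_def k_def Q_def .
qed

section \<open>Averages of sampled messages\<close>

lemma norm_sum_sq_le_card_mult:
  fixes v :: "'i \<Rightarrow> 'a::real_normed_vector"
  shows "(norm (\<Sum>n\<in>S. v n))\<^sup>2 \<le> real (card S) * (\<Sum>n\<in>S. (norm (v n))\<^sup>2)"
proof -
  have "(norm (\<Sum>n\<in>S. v n))\<^sup>2 \<le> (\<Sum>n\<in>S. norm (v n))\<^sup>2"
    by (rule power_mono[OF norm_sum]) simp
  also have "\<dots> \<le> (\<Sum>n\<in>S. (norm (v n))\<^sup>2) * real (card S)"
    by (rule sum_squared_le_sum_of_squares)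
  finally show ?thesis
    by (simp add: mult.commute)
qed

lemma nn_integral_Pi_pmf_mean_sq_le:
  fixes v :: "nat \<Rightarrow> nat \<Rightarrow> 'a::real_normed_vector"
  assumes S: "S \<subseteq> H" "card S = m" "0 < m" and H: "finite H"
    and J: "\<And>n. n \<in> H \<Longrightarrow> 0 < J n"
    and bound: "\<And>n. n \<in> H \<Longrightarrow> (\<Sum>j<J n. (norm (v n j - c))\<^sup>2) / real (J n) \<le> D"
  shows "(\<integral>\<^sup>+i. ennreal ((norm ((1 / real m) *\<^sub>R (\<Sum>n\<in>S. v n (i n)) - c))\<^sup>2)
           \<partial>Pi_pmf H 0 (\<lambda>n. pmf_of_set {..<J n})) \<le> ennreal D"
proof -
  let ?P = "Pi_pmf H 0 (\<lambda>n. pmf_of_set {..<J n})"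
  let ?X = "\<lambda>n j. (norm (v n j - c))\<^sup>2 / real m"
  have mean: "(norm ((1 / real m) *\<^sub>R (\<Sum>n\<in>S. v n (i n)) - c))\<^sup>2 \<le> (\<Sum>n\<in>S. ?X n (i n))" for i
  proof -
    have "(1 / real m) *\<^sub>R (\<Sum>n\<in>S. v n (i n)) - c = (1 / real m) *\<^sub>R (\<Sum>n\<in>S. v n (i n) - c)"
      using S by (simp add: sum_subtractf scaleR_diff_right sum_constant_scaleR)
    then have "(norm ((1 / real m) *\<^sub>R (\<Sum>n\<in>S. v n (i n)) - c))\<^sup>2
        = (norm (\<Sum>n\<in>S. v n (i n) - c))\<^sup>2 / (real m)\<^sup>2"
      by (simp add: power_divide)
    also have "\<dots> \<le> real m * (\<Sum>n\<in>S. (norm (v n (i n) - c))\<^sup>2) / (real m)\<^sup>2"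
      using norm_sum_sq_le_card_mult[of "\<lambda>n. v n (i n) - c" S] S by (intro divide_right_mono) simp_all
    also have "\<dots> = (\<Sum>n\<in>S. ?X n (i n))"
      using S by (simp add: power2_eq_square sum_divide_distrib)
    finally show ?thesis .
  qed
  have sample: "(\<integral>\<^sup>+i. ennreal (?X n (i n)) \<partial>?P) \<le> ennreal (D / real m)" if "n \<in> S" for n
  proof -
    have n: "n \<in> H"
      using that S by auto
    have "(\<integral>\<^sup>+i. ennreal (?X n (i n)) \<partial>?P) = (\<integral>\<^sup>+j. ennreal (?X n j) \<partial>map_pmf (\<lambda>i. i n) ?P)"
      by simp
    also have "map_pmf (\<lambda>i. i n) ?P = pmf_of_set {..<J n}"
      using n H by (simp add: Pi_pmf_component)
    also have "(\<integral>\<^sup>+j. ennreal (?X n j) \<partial>pmf_of_set {..<J n}) = (\<Sum>j<J n. ennreal (?X n j)) / of_nat (J n)"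
      using J[OF n] by (subst nn_integral_pmf_of_set) auto
    also have "\<dots> = ennreal ((\<Sum>j<J n. (norm (v n j - c))\<^sup>2) / real (J n) / real m)"
      using J[OF n] by (simp add: divide_ennreal ennreal_of_nat_eq_real_of_nat
          sum_divide_distrib[symmetric] sum_nonneg)
    also have "\<dots> \<le> ennreal (D / real m)"
      using bound[OF n] S by (intro ennreal_leI divide_right_mono) simp_all
    finally show ?thesis .
  qed
  have "(\<integral>\<^sup>+i. ennreal ((norm ((1 / real m) *\<^sub>R (\<Sum>n\<in>S. v n (i n)) - c))\<^sup>2) \<partial>?P)
      \<le> (\<integral>\<^sup>+i. (\<Sum>n\<in>S. ennreal (?X n (i n))) \<partial>?P)"
    using mean by (intro nn_integral_mono) (simp add: ennreal_leI)
  also have "\<dots> = (\<Sum>n\<in>S. \<integral>\<^sup>+i. ennreal (?X n (i n)) \<partial>?P)"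
    by (rule nn_integral_sum) simp
  also have "\<dots> \<le> (\<Sum>n\<in>S. ennreal (D / real m))"
    using sample by (rule sum_mono)
  also have "\<dots> = ennreal D"
    using S by (simp add: ennreal_of_nat_eq_real_of_nat ennreal_mult'[symmetric])
  finally show ?thesis .
qed

lemma nn_integral_pair_pmf_weighted_le:
  fixes c :: "'a \<Rightarrow> nat \<Rightarrow> real" and F :: "'a \<times> 'b \<Rightarrow> nat \<Rightarrow> real" and q :: "'b pmf"
  assumes c: "\<And>a g. 0 \<le> c a g" and c_sum: "\<And>a. a \<in> set_pmf p \<Longrightarrow> (\<Sum>g<G. c a g) = W"
    and F: "\<And>x g. 0 \<le> F x g"
    and bound: "\<And>a g. a \<in> set_pmf p \<Longrightarrow> g < G \<Longrightarrow> c a g \<noteq> 0 \<Longrightarrow>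
                  (\<integral>\<^sup>+i. ennreal (F (a, i) g) \<partial>q) \<le> ennreal E"
    and E: "0 \<le> E" and r: "0 \<le> r"
  shows "(\<integral>\<^sup>+x. (\<Sum>g<G. ennreal (c (fst x) g * (F x g + r))) \<partial>pair_pmf p q) \<le> ennreal (W * (E + r))"
proof -
  have inner: "(\<integral>\<^sup>+i. (\<Sum>g<G. ennreal (c a g * (F (a, i) g + r))) \<partial>q) \<le> ennreal (W * (E + r))"
    if a: "a \<in> set_pmf p" for a
  proof -
    have "(\<integral>\<^sup>+i. ennreal (c a g * (F (a, i) g + r)) \<partial>q) \<le> ennreal (c a g * (E + r))" if "g < G" for g
    proof (cases "c a g = 0")
      case False
      have "(\<integral>\<^sup>+i. ennreal (c a g * (F (a, i) g + r)) \<partial>q)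
          = ennreal (c a g) * ((\<integral>\<^sup>+i. ennreal (F (a, i) g) \<partial>q) + ennreal r)"
        using c F r by (simp add: ennreal_mult nn_integral_cmult nn_integral_add
            measure_pmf.emeasure_space_1)
      also have "\<dots> \<le> ennreal (c a g) * (ennreal E + ennreal r)"
        using bound[OF a that False] by (intro mult_left_mono add_right_mono) simp_all
      finally show ?thesis
        using c E r by (simp add: ennreal_mult)
    qed simp
    then have "(\<integral>\<^sup>+i. (\<Sum>g<G. ennreal (c a g * (F (a, i) g + r))) \<partial>q) \<le> (\<Sum>g<G. ennreal (c a g * (E + r)))"
      by (subst nn_integral_sum) (auto intro: sum_mono)
    also have "\<dots> = ennreal (W * (E + r))"
      using c E r c_sum[OF a] by (simp add: sum_distrib_right[symmetric])
    finally show ?thesis .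
  qed
  have "(\<integral>\<^sup>+x. (\<Sum>g<G. ennreal (c (fst x) g * (F x g + r))) \<partial>pair_pmf p q)
      = (\<integral>\<^sup>+a. \<integral>\<^sup>+i. (\<Sum>g<G. ennreal (c a g * (F (a, i) g + r))) \<partial>q \<partial>p)"
    by (simp add: nn_integral_pair_pmf')
  also have "\<dots> \<le> (\<integral>\<^sup>+a. ennreal (W * (E + r)) \<partial>p)"
    using inner by (intro nn_integral_mono_AE AE_pmfI)
  also have "\<dots> = ennreal (W * (E + r))"
    by (simp add: measure_pmf.emeasure_space_1)
  finally show ?thesis .
qed

lemma mean_sq_dist_eq_var_plus_sq_bias:
  fixes v :: "nat \<Rightarrow> 'a::real_inner"
  assumes J: "0 < J"
  defines "\<mu> \<equiv> (1 / real J) *\<^sub>R (\<Sum>j<J. v j)"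
  shows "(\<Sum>j<J. (norm (v j - c))\<^sup>2) / real J = (\<Sum>j<J. (norm (v j - \<mu>))\<^sup>2) / real J + (norm (\<mu> - c))\<^sup>2"
proof -
  have "(\<Sum>j<J. (v j - \<mu>) \<bullet> (\<mu> - c)) = (\<Sum>j<J. v j - \<mu>) \<bullet> (\<mu> - c)"
    by (simp add: inner_sum_left)
  also have "(\<Sum>j<J. v j - \<mu>) = 0"
    using J by (simp add: \<mu>_def sum_subtractf sum_constant_scaleR)
  finally have cross: "(\<Sum>j<J. (v j - \<mu>) \<bullet> (\<mu> - c)) = 0"
    by simp
  have "(norm (v j - c))\<^sup>2 = (norm (v j - \<mu>))\<^sup>2 + 2 * ((v j - \<mu>) \<bullet> (\<mu> - c)) + (norm (\<mu> - c))\<^sup>2" for j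
    using dot_norm[of "v j - \<mu>" "\<mu> - c"] by simp
  then have "(\<Sum>j<J. (norm (v j - c))\<^sup>2)
      = (\<Sum>j<J. (norm (v j - \<mu>))\<^sup>2) + 2 * (\<Sum>j<J. (v j - \<mu>) \<bullet> (\<mu> - c)) + real J * (norm (\<mu> - c))\<^sup>2"
    by (simp add: sum.distrib sum_distrib_left)
  then show ?thesis
    using J cross by (simp add: field_simps)
qed

section \<open>The ROTAF aggregation step\<close>

definition honest_groups :: "nat set \<Rightarrow> nat \<Rightarrow> (nat \<Rightarrow> nat) \<Rightarrow> nat set" where
  "honest_groups Byz G a = {g. g < G \<and> \<not> (\<exists>n\<in>Byz. a n = g)}"

definition honest_weight :: "nat set \<Rightarrow> nat \<Rightarrow> (nat \<Rightarrow> nat) \<Rightarrow> nat \<Rightarrow> real" where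
  "honest_weight Byz G a g =
     (if g \<in> honest_groups Byz G a then 1 / real (card (honest_groups Byz G a)) else 0)"

definition group_mean :: "nat \<Rightarrow> nat \<Rightarrow> (nat \<Rightarrow> 'a::real_vector) \<Rightarrow> (nat \<Rightarrow> nat) \<Rightarrow> nat \<Rightarrow> 'a" where
  "group_mean N m v a g = (1 / real m) *\<^sub>R (\<Sum>n\<in>{n. n < N \<and> a n = g}. v n)"

lemma honest_groups_subset: "honest_groups Byz G a \<subseteq> {..<G}"
  by (auto simp: honest_groups_def)

lemma card_Diff_honest_groups_le:
  assumes "finite Byz"
  shows "card ({..<G} - honest_groups Byz G a) \<le> card Byz"
proof -
  have "{..<G} - honest_groups Byz G a \<subseteq> a ` Byz"
    by (auto simp: honest_groups_def)
  then show ?thesis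
    using assms by (meson card_image_le card_mono finite_imageI order_trans)
qed

lemma honest_groups_nonempty:
  assumes "finite Byz" "2 * card Byz < G"
  shows "honest_groups Byz G a \<noteq> {}"
  using card_Diff_honest_groups_le[OF assms(1), of G a] assms(2) by auto

lemma sum_honest_weight:
  assumes "honest_groups Byz G a \<noteq> {}"
  shows "(\<Sum>g<G. honest_weight Byz G a g) = 1"
proof -
  have "(\<Sum>g<G. honest_weight Byz G a g) = (\<Sum>g\<in>honest_groups Byz G a. 1 / real (card (honest_groups Byz G a)))"
    unfolding honest_weight_def using honest_groups_subset
    by (simp add: sum.If_cases Int_absorb1)
  also have "\<dots> = 1"
    using assms honest_groups_subset[of Byz G a] by (simp add: finite_subset)
  finally show ?thesis .
qed

lemma honest_group_members:
  "g \<in> honest_groups Byz G a \<Longrightarrow> {n. n < N \<and> a n = g} \<subseteq> {..<N} - Byz"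
  by (auto simp: honest_groups_def)

lemma rotaf_signal_honest:
  "g \<in> honest_groups Byz G a \<Longrightarrow>
   rotaf_signal Byz N m \<eta> sg w s a i \<zeta> byz g = group_mean N m (\<lambda>n. - \<eta> *\<^sub>R sg n (i n) w) a g + s *\<^sub>R \<zeta> g"
  by (simp add: rotaf_signal_def honest_groups_def group_mean_def)

lemma rotaf_geomed_dist_sq_le:
  fixes x :: "'a::euclidean_space"
  assumes "finite Byz" "card Byz = B" "2 * B < G"
  shows "(norm (geomed G (rotaf_signal Byz N m \<eta> sg w s a i \<zeta> byz) - x))\<^sup>2
    \<le> (\<Sum>g<G. ((2 - 2 * (B / G)) / (1 - 2 * (B / G)))\<^sup>2 * honest_weight Byz G a g
           * (norm (group_mean N m (\<lambda>n. - \<eta> *\<^sub>R sg n (i n) w) a g - x + s *\<^sub>R \<zeta> g))\<^sup>2)"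
proof -
  let ?u = "rotaf_signal Byz N m \<eta> sg w s a i \<zeta> byz"
  let ?Gd = "honest_groups Byz G a"
  let ?C = "(2 - 2 * (B / G)) / (1 - 2 * (B / G))"
  have "(norm (geomed G ?u - x))\<^sup>2 \<le> ?C\<^sup>2 / card ?Gd * (\<Sum>g\<in>?Gd. (norm (?u g - x))\<^sup>2)"
    using assms card_Diff_honest_groups_le[of Byz G a]
    by (intro minimiser_dist_sq_le geomed_is_minimiser honest_groups_subset) auto
  also have "\<dots> = (\<Sum>g<G. if g \<in> ?Gd then ?C\<^sup>2 / card ?Gd * (norm (?u g - x))\<^sup>2 else 0)"
    using honest_groups_subset[of Byz G a]
    by (simp add: sum.inter_restrict[symmetric] Int_absorb1 Int_absorb2 sum_distrib_left)
  also have "\<dots> = (\<Sum>g<G. ?C\<^sup>2 * honest_weight Byz G a g * (norm (?u g - x))\<^sup>2)"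
    by (intro sum.cong refl) (simp add: honest_weight_def)
  also have "\<dots> = (\<Sum>g<G. ?C\<^sup>2 * honest_weight Byz G a g
      * (norm (group_mean N m (\<lambda>n. - \<eta> *\<^sub>R sg n (i n) w) a g - x + s *\<^sub>R \<zeta> g))\<^sup>2)"
    by (intro sum.cong refl) (simp add: honest_weight_def rotaf_signal_honest algebra_simps)
  finally show ?thesis .
qed

lemma finite_group_assignments: "finite (group_assignments N G m)"
proof -
  let ?ext = "\<lambda>f n. if n < N then f n else 0"
  have "group_assignments N G m \<subseteq> ?ext ` PiE {..<N} (\<lambda>_. {..<G})"
  proof
    fix a assume a: "a \<in> group_assignments N G m"
    then have "a = ?ext (restrict a {..<N})"
      by (auto simp: group_assignments_def fun_eq_iff)
    moreover have "restrict a {..<N} \<in> PiE {..<N} (\<lambda>_. {..<G})"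
      using a by (auto simp: group_assignments_def)
    ultimately show "a \<in> ?ext ` PiE {..<N} (\<lambda>_. {..<G})"
      by blast
  qed
  then show ?thesis
    by (rule finite_subset) (intro finite_imageI finite_PiE; simp)
qed

lemma group_assignments_nonempty:
  assumes "N = G * m" "0 < m"
  shows "group_assignments N G m \<noteq> {}"
proof -
  define a where "a n = (if n < N then n div m else 0)" for n
  have below: "n < m * (n div m) + m" for n
    using mult_div_mod_eq[of m n] mod_less_divisor[OF assms(2), of n] by linarith
  have "{n. n < N \<and> a n = g} = {g * m..<g * m + m}" if "g < G" for g
  proof -
    have "g * m + m \<le> N"
      using that assms by (metis Suc_leI add.commute mult_Suc mult_le_mono1)
    then show ?thesis
      using assms below by (auto simp: a_def div_nat_eqI mult.commute)
  qed
  then have "a \<in> group_assignments N G m"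
    using assms by (auto simp: group_assignments_def a_def less_mult_imp_div_less)
  then show ?thesis
    by blast
qed

lemma nn_integral_honest_group_mean_sq_le:
  fixes v :: "nat \<Rightarrow> nat \<Rightarrow> 'a::real_normed_vector"
  assumes a: "a \<in> group_assignments N G m" and g: "g \<in> honest_groups Byz G a" and m: "0 < m"
    and J: "\<And>n. n \<in> {..<N} - Byz \<Longrightarrow> 0 < J n"
    and bound: "\<And>n. n \<in> {..<N} - Byz \<Longrightarrow> (\<Sum>j<J n. (norm (v n j - c))\<^sup>2) / real (J n) \<le> D"
  shows "(\<integral>\<^sup>+i. ennreal ((norm (group_mean N m (\<lambda>n. v n (i n)) a g - c))\<^sup>2)
           \<partial>Pi_pmf ({..<N} - Byz) 0 (\<lambda>n. pmf_of_set {..<J n})) \<le> ennreal D"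
  unfolding group_mean_def
proof (rule nn_integral_Pi_pmf_mean_sq_le[OF honest_group_members[OF g] _ m _ J bound])
  show "card {n. n < N \<and> a n = g} = m"
    using a g by (simp add: group_assignments_def honest_groups_def)
qed simp_all

lemma sample_grad_sq_dev_le:
  fixes sg :: "nat \<Rightarrow> nat \<Rightarrow> 'a \<Rightarrow> 'a::real_inner"
  assumes "0 < J n"
    and "(norm (loc_grad sg J n x - glob_grad N sg J x))\<^sup>2 \<le> \<delta>\<^sup>2"
    and "(\<Sum>j<J n. (norm (sg n j x - loc_grad sg J n x))\<^sup>2) / real (J n) \<le> \<kappa>\<^sup>2"
  shows "(\<Sum>j<J n. (norm (- \<eta> *\<^sub>R sg n j x - - \<eta> *\<^sub>R glob_grad N sg J x))\<^sup>2) / real (J n)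
         \<le> \<eta>\<^sup>2 * (\<delta>\<^sup>2 + \<kappa>\<^sup>2)"
proof -
  have scale: "(norm (- \<eta> *\<^sub>R y - - \<eta> *\<^sub>R z))\<^sup>2 = \<eta>\<^sup>2 * (norm (y - z))\<^sup>2" for y z :: 'a
    by (simp add: scaleR_diff_right[symmetric] power_mult_distrib norm_minus_commute)
  have "(\<Sum>j<J n. (norm (sg n j x - glob_grad N sg J x))\<^sup>2) / real (J n) \<le> \<delta>\<^sup>2 + \<kappa>\<^sup>2"
    using mean_sq_dist_eq_var_plus_sq_bias[OF assms(1), of "\<lambda>j. sg n j x" "glob_grad N sg J x"] assms
    by (simp add: loc_grad_def)
  then have "\<eta>\<^sup>2 * ((\<Sum>j<J n. (norm (sg n j x - glob_grad N sg J x))\<^sup>2) / real (J n))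
      \<le> \<eta>\<^sup>2 * (\<delta>\<^sup>2 + \<kappa>\<^sup>2)"
    by (rule mult_left_mono) simp
  then show ?thesis
    by (simp only: scale sum_distrib_left[symmetric] times_divide_eq_right)
qed

lemma rotaf_noise_sq_le:
  fixes sg :: "nat \<Rightarrow> nat \<Rightarrow> 'a \<Rightarrow> 'a::real_normed_vector"
  assumes H: "{..<N} - Byz \<noteq> {}" and P: "0 < P" and hmin: "0 < hmin" and m: "0 < m"
    and K: "\<And>n. n \<in> {..<N} - Byz \<Longrightarrow> (\<Sum>j<J n. (norm (sg n j w))\<^sup>2) / real (J n) \<le> K\<^sup>2"
  shows "(\<sigma> / (real m * rotaf_rho Byz N P \<eta> sg J w * hmin))\<^sup>2 \<le> \<eta>\<^sup>2 * (\<sigma>\<^sup>2 / (real m * P * hmin\<^sup>2) * K\<^sup>2)"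
proof -
  define e where "e n = (\<Sum>j<J n. (norm (- \<eta> *\<^sub>R sg n j w))\<^sup>2) / real (J n)" for n
  define Mx where "Mx = Max (e ` ({..<N} - Byz))"
  have e_eq: "e n = \<eta>\<^sup>2 * ((\<Sum>j<J n. (norm (sg n j w))\<^sup>2) / real (J n))" for n
    unfolding e_def by (simp add: power_mult_distrib sum_distrib_left[symmetric])
  have "e n \<le> \<eta>\<^sup>2 * K\<^sup>2" if "n \<in> {..<N} - Byz" for n
    unfolding e_eq by (rule mult_left_mono[OF K[OF that]]) simp
  then have "Mx \<le> \<eta>\<^sup>2 * K\<^sup>2"
    using H unfolding Mx_def by simp
  moreover have "0 \<le> Mx"
    using H unfolding Mx_def e_def by (auto simp: Max_ge_iff sum_nonneg)
  moreover have rho: "rotaf_rho Byz N P \<eta> sg J w = sqrt (P / Mx)"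
    unfolding rotaf_rho_def Mx_def e_def ..
  \<comment> \<open>If all honest messages vanish, \<open>\<rho> = sqrt (P / 0) = 0\<close> and hence \<open>s = \<sigma> / 0 = 0\<close>.\<close>
  ultimately show ?thesis
  proof (cases "Mx = 0")
    case False
    with \<open>0 \<le> Mx\<close> have Mx: "0 < Mx"
      by simp
    have "(\<sigma> / (real m * rotaf_rho Byz N P \<eta> sg J w * hmin))\<^sup>2 = \<sigma>\<^sup>2 * Mx / ((real m)\<^sup>2 * P * hmin\<^sup>2)"
      using Mx P hmin m by (simp add: rho field_simps)
    also have "\<dots> \<le> \<sigma>\<^sup>2 * (\<eta>\<^sup>2 * K\<^sup>2) / (real m * P * hmin\<^sup>2)"
    proof (rule frac_le)
      show "real m * P * hmin\<^sup>2 \<le> (real m)\<^sup>2 * P * hmin\<^sup>2"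
        using m P by (intro mult_right_mono) (simp_all add: power2_eq_square)
    qed (use \<open>Mx \<le> \<eta>\<^sup>2 * K\<^sup>2\<close> m P hmin in \<open>simp_all add: mult_left_mono\<close>)
    finally show ?thesis
      by (simp add: mult_ac)
  qed (use P in \<open>simp add: rho\<close>)
qed

lemma nn_integral_rotaf_geomed_error_le:
  fixes sg :: "nat \<Rightarrow> nat \<Rightarrow> 'a \<Rightarrow> 'a::euclidean_space" and x :: 'a
  assumes groups: "N = G * m" "0 < m"
    and Byz: "finite Byz" "card Byz = B" "2 * B < G"
    and J: "\<And>n. n \<in> {..<N} - Byz \<Longrightarrow> 0 < J n"
    and dev: "\<And>n. n \<in> {..<N} - Byz \<Longrightarrow> (\<Sum>j<J n. (norm (- \<eta> *\<^sub>R sg n j w - x))\<^sup>2) / real (J n) \<le> D"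
    and D: "0 \<le> D"
  defines "C \<equiv> (2 - 2 * (real B / real G)) / (1 - 2 * (real B / real G))"
  shows "(\<integral>\<^sup>+\<omega>. ennreal ((norm (geomed G (rotaf_signal Byz N m \<eta> sg w s (fst (fst \<omega>)) (snd (fst \<omega>)) (snd \<omega>) (byz \<omega>))
              - x))\<^sup>2)
           \<partial>(measure_pmf (pair_pmf (pmf_of_set (group_assignments N G m))
                                    (Pi_pmf ({..<N} - Byz) 0 (\<lambda>n. pmf_of_set {..<J n})))
             \<Otimes>\<^sub>M PiM {..<G} (\<lambda>_. std_gauss)))
         \<le> ennreal (C\<^sup>2 * (D + real DIM('a) * s\<^sup>2))"
proof -
  define PM where "PM = pair_pmf (pmf_of_set (group_assignments N G m)) (Pi_pmf ({..<N} - Byz) 0 (\<lambda>n. pmf_of_set {..<J n}))"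
  define A where "A y g = group_mean N m (\<lambda>n. - \<eta> *\<^sub>R sg n (snd y n) w) (fst y) g - x"
    for y :: "(nat \<Rightarrow> nat) \<times> (nat \<Rightarrow> nat)" and g
  define c where "c a g = C\<^sup>2 * honest_weight Byz G a g" for a g
  have c_nonneg: "0 \<le> c a g" for a g
    by (simp add: c_def honest_weight_def)
  \<comment> \<open>The geometric median is bounded pointwise before integrating.\<close>
  have "(\<integral>\<^sup>+\<omega>. ennreal ((norm (geomed G (rotaf_signal Byz N m \<eta> sg w s (fst (fst \<omega>)) (snd (fst \<omega>)) (snd \<omega>) (byz \<omega>))
              - x))\<^sup>2) \<partial>(measure_pmf PM \<Otimes>\<^sub>M PiM {..<G} (\<lambda>_. std_gauss)))
      \<le> (\<integral>\<^sup>+\<omega>. (\<Sum>g<G. ennreal (c (fst (fst \<omega>)) g * (norm (A (fst \<omega>) g + s *\<^sub>R snd \<omega> g))\<^sup>2))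
            \<partial>(measure_pmf PM \<Otimes>\<^sub>M PiM {..<G} (\<lambda>_. std_gauss)))"
    using rotaf_geomed_dist_sq_le[OF Byz, where x = x] c_nonneg
    by (intro nn_integral_mono) (simp add: A_def c_def C_def ennreal_leI)
  also have "\<dots> = (\<integral>\<^sup>+y. (\<Sum>g<G. ennreal (c (fst y) g * ((norm (A y g))\<^sup>2 + real DIM('a) * s\<^sup>2))) \<partial>PM)"
    using c_nonneg by (rule nn_integral_pmf_gauss_noise)
  also have "\<dots> \<le> ennreal (C\<^sup>2 * (D + real DIM('a) * s\<^sup>2))"
    unfolding PM_def
  proof (rule nn_integral_pair_pmf_weighted_le)
    fix a assume "a \<in> set_pmf (pmf_of_set (group_assignments N G m))"
    then show "(\<Sum>g<G. c a g) = C\<^sup>2"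
      using honest_groups_nonempty[OF Byz(1)] Byz
      by (simp add: c_def sum_distrib_left[symmetric] sum_honest_weight)
  next
    fix a g assume a: "a \<in> set_pmf (pmf_of_set (group_assignments N G m))" and "g < G" "c a g \<noteq> 0"
    then have "g \<in> honest_groups Byz G a"
      by (simp add: c_def honest_weight_def split: if_splits)
    moreover have "a \<in> group_assignments N G m"
      using a groups by (simp add: finite_group_assignments group_assignments_nonempty)
    ultimately show "(\<integral>\<^sup>+i. ennreal ((norm (A (a, i) g))\<^sup>2) \<partial>Pi_pmf ({..<N} - Byz) 0 (\<lambda>n. pmf_of_set {..<J n}))
        \<le> ennreal D"
      unfolding A_def fst_conv snd_conv using groups J dev
      by (intro nn_integral_honest_group_mean_sq_le[where v = "\<lambda>n j. - \<eta> *\<^sub>R sg n j w"]) auto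
  qed (use c_nonneg D in simp_all)
  finally show ?thesis
    unfolding PM_def .
qed

theorem mainTheorem5:
  fixes N G m B :: nat and Byz :: "nat set"
    and l :: "nat \<Rightarrow> nat \<Rightarrow> 'a::euclidean_space \<Rightarrow> real"
    and sg :: "nat \<Rightarrow> nat \<Rightarrow> 'a \<Rightarrow> 'a"
    and J :: "nat \<Rightarrow> nat"
    and \<mu> L \<delta> \<kappa> K \<eta> P \<sigma> hmin :: real
    and w :: 'a
    and byz :: "(((nat \<Rightarrow> nat) \<times> (nat \<Rightarrow> nat)) \<times> (nat \<Rightarrow> 'a)) \<Rightarrow> nat \<Rightarrow> 'a"
  assumes groups: "N = G * m" "0 < m"
    and byz_set: "Byz \<subseteq> {..<N}" "card Byz = B"
    and few_byz: "real B < real G / 2"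
    and params: "0 < \<eta>" "0 < P" "0 \<le> \<sigma>" "0 < hmin"
    and constants: "0 < \<mu>" "0 < L" "0 < \<delta>" "0 < \<kappa>" "0 < K"
    and samples: "\<And>n. n < N \<Longrightarrow> 0 < J n"
    and sample_grad: "\<And>n j x. n < N \<Longrightarrow> j < J n \<Longrightarrow>
                        (l n j has_derivative (\<lambda>h. sg n j x \<bullet> h)) (at x)"
    and A1: "strongly_convex \<mu> (glob_loss N l J)"
    and A2: "L-lipschitz_on UNIV (glob_grad N sg J)"
    and A3: "\<And>n x. n \<in> {..<N} - Byz \<Longrightarrow> (norm (loc_grad sg J n x - glob_grad N sg J x))\<^sup>2 \<le> \<delta>\<^sup>2"
    and A4: "\<And>n x. n \<in> {..<N} - Byz \<Longrightarrow>
               (\<Sum>j<J n. (norm (sg n j x - loc_grad sg J n x))\<^sup>2) / real (J n) \<le> \<kappa>\<^sup>2"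
    and A5: "\<And>n x. n \<in> {..<N} - Byz \<Longrightarrow> (\<Sum>j<J n. (norm (sg n j x))\<^sup>2) / real (J n) \<le> K\<^sup>2"
    and byz_meas: "\<And>g. (\<lambda>\<omega>. byz \<omega> g) \<in> borel_measurable
        (measure_pmf (pair_pmf (pmf_of_set (group_assignments N G m))
                               (Pi_pmf ({..<N} - Byz) 0 (\<lambda>n. pmf_of_set {..<J n})))
         \<Otimes>\<^sub>M PiM {..<G} (\<lambda>_. std_gauss))"
  shows
    "(let M = measure_pmf (pair_pmf (pmf_of_set (group_assignments N G m))
                               (Pi_pmf ({..<N} - Byz) 0 (\<lambda>n. pmf_of_set {..<J n})))
              \<Otimes>\<^sub>M PiM {..<G} (\<lambda>_. std_gauss);
          \<rho> = rotaf_rho Byz N P \<eta> sg J w;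
          s = \<sigma> / (real m * \<rho> * hmin);
          u = (\<lambda>\<omega>. rotaf_signal Byz N m \<eta> sg w s (fst (fst \<omega>)) (snd (fst \<omega>)) (snd \<omega>) (byz \<omega>));
          \<alpha> = real B / real G;
          C = (2 - 2 * \<alpha>) / (1 - 2 * \<alpha>)
      in (\<integral>\<^sup>+ \<omega>. ennreal ((norm (geomed G (u \<omega>) + \<eta> *\<^sub>R glob_grad N sg J w))\<^sup>2) \<partial>M)
         \<le> ennreal (C\<^sup>2 * \<eta>\<^sup>2 * (\<delta>\<^sup>2 + \<kappa>\<^sup>2
                 + real DIM('a) * \<sigma>\<^sup>2 / (real m * P * hmin\<^sup>2) * K\<^sup>2)))"
proof -
  define s where "s = \<sigma> / (real m * rotaf_rho Byz N P \<eta> sg J w * hmin)"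
  define C where "C = (2 - 2 * (real B / real G)) / (1 - 2 * (real B / real G))"
  have finite_Byz: "finite Byz"
    using byz_set(1) finite_subset by blast
  have few: "2 * B < G"
    using few_byz by linarith
  have "card Byz < card {..<N}"
    using byz_set(2) few groups by (simp add: order_less_le_trans[of _ G])
  then have "{..<N} - Byz \<noteq> {}"
    using card_mono[OF finite_Byz, of "{..<N}"] by auto
  then have noise: "s\<^sup>2 \<le> \<eta>\<^sup>2 * (\<sigma>\<^sup>2 / (real m * P * hmin\<^sup>2) * K\<^sup>2)"
    unfolding s_def using params groups A5 by (intro rotaf_noise_sq_le) auto
  have "(\<integral>\<^sup>+\<omega>. ennreal ((norm (geomed G (rotaf_signal Byz N m \<eta> sg w s (fst (fst \<omega>)) (snd (fst \<omega>)) (snd \<omega>) (byz \<omega>))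
            - - \<eta> *\<^sub>R glob_grad N sg J w))\<^sup>2)
         \<partial>(measure_pmf (pair_pmf (pmf_of_set (group_assignments N G m))
                                  (Pi_pmf ({..<N} - Byz) 0 (\<lambda>n. pmf_of_set {..<J n})))
           \<Otimes>\<^sub>M PiM {..<G} (\<lambda>_. std_gauss)))
      \<le> ennreal (C\<^sup>2 * (\<eta>\<^sup>2 * (\<delta>\<^sup>2 + \<kappa>\<^sup>2) + real DIM('a) * s\<^sup>2))"
    unfolding C_def using groups finite_Byz byz_set(2) few samples A3 A4
    by (intro nn_integral_rotaf_geomed_error_le sample_grad_sq_dev_le) auto
  also have "\<dots> \<le> ennreal (C\<^sup>2 * \<eta>\<^sup>2 * (\<delta>\<^sup>2 + \<kappa>\<^sup>2 + real DIM('a) * \<sigma>\<^sup>2 / (real m * P * hmin\<^sup>2) * K\<^sup>2))"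
    using mult_left_mono[OF noise, of "C\<^sup>2 * real DIM('a)"] by (intro ennreal_leI) (simp add: algebra_simps)
  finally show ?thesis
    unfolding Let_def s_def C_def by simp
qed

end
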